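(* Let $m\ge1$ and let $x_0,\dots,x_{m-1}$ be indeterminates. In the ring of $m\times m$ matrices over $\mathbb{Q}(x_0,\dots,x_{m-1})$ (rows and columns indexed by $[0,m-1]$), define $V_x=(x_j^i)_{i,j}$; $E_x=((-1)^{i-j}E_{i-j,[0,i[})_{i,j}$, where $E_{d,[0,i[}$ is the elementary symmetric polynomial of degree $d$ in $x_0,\dots,x_{i-1}$ (with $E_{0,[0,i[}=1$ and $E_{d,[0,i[}=0$ for $d<0$ or $d>i$); $L_x=(L_{i,j})_{i,j}$ with $L_{i,j}=\prod_{k\in[0,j-1]\setminus\{i\}}(x_j-x_k)\big/\prod_{k\in[0,j-1]\setminus\{i\}}(x_i-x_k)$ if $i<j$ and $L_{i,j}=0$ if $i\ge j$; and $Y_x$ the diagonal matrix with $i$th entry $\prod_{k\in[0,i-1]}(x_i-x_k)$. Then \[ E_xV_x(I-L_x)=Y_x, \] where $I$ is the identity matrix.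
   Context: $[a,b]=\{x\in\mathbb{Z}:a\le x\le b\}$. *)

theory Defs
  imports Main "Jordan_Normal_Form.Matrix"
begin

definition esym :: "int \<Rightarrow> nat set \<Rightarrow> (nat \<Rightarrow> 'a::comm_ring_1) \<Rightarrow> 'a" where
  "esym d S x = (if d < 0 then 0 else
     (\<Sum>T\<in>{T. T \<subseteq> S \<and> card T = nat d}. \<Prod>k\<in>T. x k))"

definition Vmat :: "nat \<Rightarrow> (nat \<Rightarrow> 'a::field) \<Rightarrow> 'a mat" where
  "Vmat m x = mat m m (\<lambda>(i,j). x j ^ i)"

definition Emat :: "nat \<Rightarrow> (nat \<Rightarrow> 'a::field) \<Rightarrow> 'a mat" where
  "Emat m x = mat m m (\<lambda>(i,j).
     (-1) powi (int i - int j) * esym (int i - int j) {0..<i} x)"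

definition Lmat :: "nat \<Rightarrow> (nat \<Rightarrow> 'a::field) \<Rightarrow> 'a mat" where
  "Lmat m x = mat m m (\<lambda>(i,j). if i < j then
     (\<Prod>k\<in>{0..<j} - {i}. x j - x k) / (\<Prod>k\<in>{0..<j} - {i}. x i - x k) else 0)"

definition Ymat :: "nat \<Rightarrow> (nat \<Rightarrow> 'a::field) \<Rightarrow> 'a mat" where
  "Ymat m x = mat m m (\<lambda>(i,j). if i = j then (\<Prod>k\<in>{0..<i}. x i - x k) else 0)"

end

(* By Vieta's formulas, row i of E_x maps the column (x_j^l)_l to P_i(x_j), where
   P_i(t) = prod_{k<i} (t - x_k); so (E_x V_x)_{ij} = P_i(x_j).  Column j of L_x holds the
   Lagrange basis for the nodes x_0, ..., x_{j-1} evaluated at x_j, so the (i,j) entry of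
   E_x V_x (I - L_x) is P_i(x_j) minus the value at x_j of the interpolant of P_i at these nodes.
   For i < j the interpolation is exact because deg P_i = i < j, and the entry vanishes; for
   i >= j, P_i vanishes at every node, leaving P_i(x_j), which is 0 for i > j and the
   diagonal entry of Y_x for i = j. *)
theory Submission
  imports Defs "HOL-Computational_Algebra.Polynomial"
begin

lemma prod_diff_eq_sum_esym:
  fixes x :: "nat \<Rightarrow> 'a::comm_ring_1"
  assumes "finite A"
  shows "(\<Prod>k\<in>A. t - x k) = (\<Sum>d\<le>card A. (-1)^d * esym (int d) A x * t^(card A - d))"
proof -
  have "(\<Prod>k\<in>A. t - x k) = (\<Sum>B\<in>Pow A. (\<Prod>k\<in>B. - x k) * (\<Prod>k\<in>A-B. t))"
    using prod_add[OF assms, of "\<lambda>k. - x k" "\<lambda>_. t"] by simp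
  also have "\<dots> = (\<Sum>B\<in>Pow A. (-1)^card B * (\<Prod>k\<in>B. x k) * t^(card A - card B))"
    using assms by (intro sum.cong) (auto simp: prod_uminus card_Diff_subset finite_subset)
  also have "\<dots> = (\<Sum>d\<le>card A. \<Sum>B\<in>{B. B \<in> Pow A \<and> card B = d}.
                     (-1)^card B * (\<Prod>k\<in>B. x k) * t^(card A - card B))"
    using assms by (intro sum.group[symmetric]) (auto intro: card_mono)
  also have "\<dots> = (\<Sum>d\<le>card A. (-1)^d * esym (int d) A x * t^(card A - d))"
    by (intro sum.cong refl)
       (simp add: esym_def sum_distrib_left sum_distrib_right mult.assoc conj_commute)
  finally show ?thesis .
qed

lemma degree_prod_linear_factors:
  "degree (\<Prod>k\<in>A. [:- c k, 1::'a::idom:]) = card A"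
  by (simp add: degree_prod_sum_eq)

lemma lagrange_interpolation:
  fixes x :: "'b \<Rightarrow> 'a::field" and q :: "'a poly"
  assumes S: "finite S" "inj_on x S" and deg: "degree q < card S"
  shows "(\<Sum>l\<in>S. poly q (x l) * ((\<Prod>k\<in>S-{l}. t - x k) / (\<Prod>k\<in>S-{l}. x l - x k)))
         = poly q t"
proof -
  define b where "b l = (\<Prod>k\<in>S-{l}. [:- x k, 1:])" for l
  define p where "p = (\<Sum>l\<in>S. smult (poly q (x l) / poly (b l) (x l)) (b l))"
  have poly_b: "poly (b l) s = (\<Prod>k\<in>S-{l}. s - x k)" for l s
    by (simp add: b_def poly_prod)
  have "degree p < card S"
    unfolding p_def using S deg
    by (intro degree_sum_less) (auto simp: b_def degree_prod_linear_factors
        intro: le_less_trans[OF degree_smult_le])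
  moreover have "poly p (x l') = poly q (x l')" if l': "l' \<in> S" for l'
  proof -
    have b_root: "poly (b l) (x l') = 0" if "l \<in> S - {l'}" for l
      using that l' S by (auto simp: poly_b prod_zero_iff)
    have b_nonzero: "poly (b l') (x l') \<noteq> 0"
      using S l' by (auto simp: poly_b prod_zero_iff inj_on_def)
    have "poly p (x l') = (\<Sum>l\<in>S. poly q (x l) / poly (b l) (x l) * poly (b l) (x l'))"
      by (simp add: p_def poly_sum)
    also have "\<dots> = poly q (x l') / poly (b l') (x l') * poly (b l') (x l')"
      using S l' b_root by (intro sum.remove[THEN trans]) (auto intro: sum.neutral)
    finally show ?thesis using b_nonzero by simp
  qed
  ultimately have "p = q"
    using S deg by (intro poly_eqI_degree[of "x ` S"]) (auto simp: card_image)
  then have "poly p t = poly q t" by simp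
  then show ?thesis by (simp add: p_def poly_sum poly_b)
qed

lemma index_Emat_mult_Vmat:
  fixes x :: "nat \<Rightarrow> 'a::field"
  assumes "i < m" "j < m"
  shows "(Emat m x * Vmat m x) $$ (i, j) = (\<Prod>k\<in>{0..<i}. x j - x k)"
proof -
  have "(Emat m x * Vmat m x) $$ (i, j)
        = (\<Sum>l<m. (-1) powi (int i - int l) * esym (int i - int l) {0..<i} x * x j ^ l)"
    using assms by (simp add: Emat_def Vmat_def scalar_prod_def atLeast0LessThan)
  also have "\<dots> = (\<Sum>l\<le>i. (-1) powi (int i - int l) * esym (int i - int l) {0..<i} x * x j ^ l)"
    using assms by (intro sum.mono_neutral_right) (auto simp: esym_def)
  also have "\<dots> = (\<Sum>l\<le>i. (-1) ^ (i - l) * esym (int (i - l)) {0..<i} x * x j ^ l)"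
    by (intro sum.cong refl) (simp add: of_nat_diff flip: power_int_of_nat)
  also have "\<dots> = (\<Sum>d\<le>i. (-1) ^ d * esym (int d) {0..<i} x * x j ^ (i - d))"
    by (subst sum.atLeastAtMost_rev[of _ 0 i, simplified atLeast0AtMost]) simp
  also have "\<dots> = (\<Prod>k\<in>{0..<i}. x j - x k)"
    by (simp add: prod_diff_eq_sum_esym)
  finally show ?thesis .
qed

lemma index_mult_one_minus_Lmat:
  fixes x :: "nat \<Rightarrow> 'a::field"
  assumes "A \<in> carrier_mat n m" and "i < n" "j < m"
  shows "(A * (1\<^sub>m m - Lmat m x)) $$ (i, j)
         = A $$ (i, j) - (\<Sum>l\<in>{0..<j}. A $$ (i, l) *
             ((\<Prod>k\<in>{0..<j}-{l}. x j - x k) / (\<Prod>k\<in>{0..<j}-{l}. x l - x k)))"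
proof -
  have prefix: "{0..<m} \<inter> {l. l < j} = {0..<j}"
    using \<open>j < m\<close> by auto
  have "(A * (1\<^sub>m m - Lmat m x)) $$ (i, j)
        = (\<Sum>l\<in>{0..<m}. A $$ (i, l) * ((if l = j then 1 else 0) -
             (if l < j then (\<Prod>k\<in>{0..<j}-{l}. x j - x k) / (\<Prod>k\<in>{0..<j}-{l}. x l - x k) else 0)))"
    using assms by (auto simp: scalar_prod_def Lmat_def intro!: sum.cong)
  also have "\<dots> = A $$ (i, j) - (\<Sum>l\<in>{0..<j}. A $$ (i, l) *
             ((\<Prod>k\<in>{0..<j}-{l}. x j - x k) / (\<Prod>k\<in>{0..<j}-{l}. x l - x k)))"
    using assms prefix
    by (simp add: right_diff_distrib sum_subtractf if_distrib[of "(*) _"] sum.If_cases)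
  finally show ?thesis .
qed

lemma Emat_Vmat_one_minus_Lmat:
  fixes x :: "nat \<Rightarrow> 'a::field"
  assumes inj: "inj_on x {0..<m}"
  shows "Emat m x * Vmat m x * (1\<^sub>m m - Lmat m x) = Ymat m x"
proof (rule eq_matI)
  fix i j assume "i < dim_row (Ymat m x)" "j < dim_col (Ymat m x)"
  then have i: "i < m" and j: "j < m" by (simp_all add: Ymat_def)
  define q where "q = (\<Prod>k\<in>{0..<i}. [:- x k, 1:])"
  have poly_q: "poly q t = (\<Prod>k\<in>{0..<i}. t - x k)" for t
    by (simp add: q_def poly_prod)
  have "Emat m x * Vmat m x \<in> carrier_mat m m"
    by (simp add: Emat_def Vmat_def carrier_matI)
  then have entry: "(Emat m x * Vmat m x * (1\<^sub>m m - Lmat m x)) $$ (i, j)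
      = poly q (x j) - (\<Sum>l\<in>{0..<j}. poly q (x l) *
          ((\<Prod>k\<in>{0..<j}-{l}. x j - x k) / (\<Prod>k\<in>{0..<j}-{l}. x l - x k)))"
    using i j by (simp add: index_mult_one_minus_Lmat index_Emat_mult_Vmat poly_q)
  show "(Emat m x * Vmat m x * (1\<^sub>m m - Lmat m x)) $$ (i, j) = Ymat m x $$ (i, j)"
  proof (cases "i < j")
    case True
    have "inj_on x {0..<j}" "degree q < card {0..<j}"
      using inj j True by (auto simp: q_def degree_prod_linear_factors intro: inj_on_subset)
    then show ?thesis
      using lagrange_interpolation[of "{0..<j}" x q "x j"] True i j
      by (simp add: entry Ymat_def)
  next
    case False
    then have "poly q (x l) = 0" if "l < j" for l
      using that by (auto simp: poly_q prod_zero_iff)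
    then have "(Emat m x * Vmat m x * (1\<^sub>m m - Lmat m x)) $$ (i, j) = poly q (x j)"
      by (simp add: entry)
    also have "\<dots> = Ymat m x $$ (i, j)"
      using False i j by (auto simp: Ymat_def poly_q prod_zero_iff)
    finally show ?thesis .
  qed
qed (simp_all add: Emat_def Lmat_def Ymat_def)

theorem proposition1p7:
  fixes m :: nat and x :: "nat \<Rightarrow> 'a::field_char_0"
  assumes "m \<ge> 1"
    and "inj_on x {0..<m}"
  shows "Emat m x * Vmat m x * (1\<^sub>m m - Lmat m x) = Ymat m x"
  using assms(2) by (rule Emat_Vmat_one_minus_Lmat)

end
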